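(* Let $F$ be the free group on the totally ordered set $X=\{x_1<\dots<x_m\}$, and let $n\ge1$, $c\ge1$ with $c\ge n-1$. Let $Y$ be the set of all basic commutators on $X$ of weights $c+1,\dots,c+n$ and $Z=\{[b,a]: a,b\in Y,\ b>a\}$. Then $$\gamma_2(\gamma_{c+1}(F))=\langle Z\rangle\,[\gamma_{c+n+1}(F),\gamma_{c+1}(F)],$$ i.e. $\gamma_2(\gamma_{c+1}(F))\equiv\langle Z\rangle \pmod{[\gamma_{c+n+1}(F),\gamma_{c+1}(F)]}$.
   Context: $\gamma_k(F)$ is the $k$-th term of the lower central series of $F$, and $\gamma_2(H)=[H,H]$. Basic commutators on a totally ordered set $X$ of free generators are defined inductively with their weights $wt$: the elements of $X$ are the basic commutators of weight 1, ordered as in $X$. Assuming basic commutators of weight $<k$ have been defined and ordered, a commutator $[b,a]$ is a basic commutator of weight $k$ if $b,a$ are basic commutators with $wt(a)+wt(b)=k$, $b>a$, and, if $b=[b_1,b_2]$ (with $b_1,b_2$ basic), then $b_2\le a$. The ordering is then extended to weight $k$ so that all basic commutators of smaller weight precede those of weight $k$. The order on $Y$ is the one inherited from this ordering. *)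

theory Defs
  imports "HOL-Algebra.Algebra"
begin

definition grp_comm :: "('a, 'b) monoid_scheme \<Rightarrow> 'a \<Rightarrow> 'a \<Rightarrow> 'a" where
  "grp_comm G g h = inv\<^bsub>G\<^esub> g \<otimes>\<^bsub>G\<^esub> inv\<^bsub>G\<^esub> h \<otimes>\<^bsub>G\<^esub> g \<otimes>\<^bsub>G\<^esub> h"

definition comm_subgroup :: "('a, 'b) monoid_scheme \<Rightarrow> 'a set \<Rightarrow> 'a set \<Rightarrow> 'a set" where
  "comm_subgroup G H K = generate G {grp_comm G h k | h k. h \<in> H \<and> k \<in> K}"

fun lcs :: "('a, 'b) monoid_scheme \<Rightarrow> nat \<Rightarrow> 'a set" where
  "lcs G 0 = carrier G"
| "lcs G (Suc 0) = carrier G"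
| "lcs G (Suc (Suc k)) = comm_subgroup G (lcs G (Suc k)) (carrier G)"

text \<open>Words over the generators: letter (i, True) is x_i, (i, False) is x_i^-1.\<close>
fun word_eval :: "('a, 'b) monoid_scheme \<Rightarrow> (nat \<Rightarrow> 'a) \<Rightarrow> (nat \<times> bool) list \<Rightarrow> 'a" where
  "word_eval G x [] = \<one>\<^bsub>G\<^esub>"
| "word_eval G x ((i, e) # w) =
     (if e then x i else inv\<^bsub>G\<^esub> (x i)) \<otimes>\<^bsub>G\<^esub> word_eval G x w"

fun reduced_word :: "(nat \<times> bool) list \<Rightarrow> bool" where
  "reduced_word ((i, e) # (j, f) # w) =
     (\<not> (i = j \<and> e \<noteq> f) \<and> reduced_word ((j, f) # w))"
| "reduced_word _ = True"

definition free_on :: "('a, 'b) monoid_scheme \<Rightarrow> nat \<Rightarrow> (nat \<Rightarrow> 'a) \<Rightarrow> bool" where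
  "free_on G m x \<longleftrightarrow>
     x ` {..<m} \<subseteq> carrier G \<and>
     generate G (x ` {..<m}) = carrier G \<and>
     (\<forall>w. w \<noteq> [] \<and> fst ` set w \<subseteq> {..<m} \<and> reduced_word w \<longrightarrow> word_eval G x w \<noteq> \<one>\<^bsub>G\<^esub>)"

text \<open>Formal commutators: Br b a stands for [b,a].\<close>
datatype fcomm = Gen nat | Br fcomm fcomm

fun wt :: "fcomm \<Rightarrow> nat" where
  "wt (Gen i) = 1"
| "wt (Br b a) = wt b + wt a"

fun feval :: "('a, 'b) monoid_scheme \<Rightarrow> (nat \<Rightarrow> 'a) \<Rightarrow> fcomm \<Rightarrow> 'a" where
  "feval G x (Gen i) = x i"
| "feval G x (Br b a) = grp_comm G (feval G x b) (feval G x a)"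

text \<open>Basic commutators on X = {x_0,...,x_(m-1)} w.r.t. a strict order r on formal
  commutators ((a,b) \<in> r means a < b).\<close>
fun basic :: "(fcomm \<times> fcomm) set \<Rightarrow> nat \<Rightarrow> fcomm \<Rightarrow> bool" where
  "basic r m (Gen i) = (i < m)"
| "basic r m (Br b a) =
     (basic r m b \<and> basic r m a \<and> (a, b) \<in> r \<and>
      (case b of Gen _ \<Rightarrow> True | Br b1 b2 \<Rightarrow> b2 = a \<or> (b2, a) \<in> r))"

definition admissible_order :: "(fcomm \<times> fcomm) set \<Rightarrow> bool" where
  "admissible_order r \<longleftrightarrow>
     strict_linear_order_on UNIV r \<and>
     (\<forall>i j. (Gen i, Gen j) \<in> r \<longleftrightarrow> i < j) \<and>
     (\<forall>s t. wt s < wt t \<longrightarrow> (s, t) \<in> r)"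

end

theory Submission
  imports Defs
begin

text \<open>
  Let \<open>A = \<gamma>\<^sub>c\<^sub>+\<^sub>1\<close> and \<open>K = \<gamma>\<^sub>c\<^sub>+\<^sub>n\<^sub>+\<^sub>1\<close>.  The proof has two independent halves.

  (1) Hall's collection process, run modulo the next term of the lower central series:
  for every \<open>w \<ge> 1\<close>, \<open>\<gamma>\<^sub>w\<close> is generated by the values of the basic commutators of weight
  \<open>w\<close> together with \<open>\<gamma>\<^sub>w\<^sub>+\<^sub>1\<close>.  The heart is that \<open>[u,v]\<close> lies in this subgroup for basic
  \<open>u, v\<close> of total weight \<open>w\<close>; non-basic pairs are rewritten by the Hall--Witt identity,
  by induction on the weight and, within a weight, on the position of \<open>v\<close> in the order.
  Iterating gives \<open>A = \<langle>Y \<union> K\<rangle>\<close>.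

  (2) A purely group-theoretic fact: if \<open>A = \<langle>S \<union> K\<rangle>\<close> with \<open>[A,A] \<subseteq> K \<subseteq> A\<close> normal, then
  \<open>[A,A] = \<langle>[S,S]\<rangle>[K,A]\<close>; the right-hand side is a subgroup normalised by \<open>A\<close>, so
  commutators of generators suffice.  The hypothesis \<open>c \<ge> n - 1\<close> is exactly what gives
  \<open>[A,A] \<subseteq> \<gamma>\<^sub>2\<^sub>c\<^sub>+\<^sub>2 \<subseteq> K\<close>.
\<close>

section \<open>Commutator calculus in an arbitrary group\<close>

context group
begin

text \<open>Rewriting with these rules normalises any word built from commutators.\<close>
lemma inv_cancel_left: "x \<in> carrier G \<Longrightarrow> y \<in> carrier G \<Longrightarrow> x \<otimes> (inv x \<otimes> y) = y"
  and inv_cancel_left': "x \<in> carrier G \<Longrightarrow> y \<in> carrier G \<Longrightarrow> inv x \<otimes> (x \<otimes> y) = y"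
  by (metis inv_closed l_one m_assoc r_inv, metis inv_closed l_one m_assoc l_inv)

lemmas comm_simps = grp_comm_def m_assoc inv_mult_group inv_cancel_left inv_cancel_left'

lemma comm_closed [simp]: "g \<in> carrier G \<Longrightarrow> h \<in> carrier G \<Longrightarrow> grp_comm G g h \<in> carrier G"
  by (simp add: grp_comm_def)

lemma comm_inv: "g \<in> carrier G \<Longrightarrow> h \<in> carrier G \<Longrightarrow> inv (grp_comm G g h) = grp_comm G h g"
  by (simp add: comm_simps)

lemma comm_self: "h \<in> carrier G \<Longrightarrow> grp_comm G h h = \<one>"
  by (simp add: comm_simps)

lemma comm_one_left: "h \<in> carrier G \<Longrightarrow> grp_comm G \<one> h = \<one>"
  by (simp add: comm_simps)

lemma conj_comm: "g \<in> carrier G \<Longrightarrow> h \<in> carrier G \<Longrightarrow> inv h \<otimes> g \<otimes> h = g \<otimes> grp_comm G g h"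
  by (simp add: comm_simps)

lemma comm_mult_left: "g1 \<in> carrier G \<Longrightarrow> g2 \<in> carrier G \<Longrightarrow> h \<in> carrier G \<Longrightarrow>
  grp_comm G (g1 \<otimes> g2) h = (inv g2 \<otimes> grp_comm G g1 h \<otimes> g2) \<otimes> grp_comm G g2 h"
  by (simp add: comm_simps)

lemma comm_inv_left: "g \<in> carrier G \<Longrightarrow> h \<in> carrier G \<Longrightarrow>
  grp_comm G (inv g) h = inv (inv g) \<otimes> inv (grp_comm G g h) \<otimes> inv g"
  by (simp add: comm_simps)

lemma conj_comm_dist: "g \<in> carrier G \<Longrightarrow> h \<in> carrier G \<Longrightarrow> k \<in> carrier G \<Longrightarrow>
  g \<otimes> grp_comm G h k \<otimes> inv g = grp_comm G (g \<otimes> h \<otimes> inv g) (g \<otimes> k \<otimes> inv g)"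
  by (simp add: comm_simps)

lemma hall_witt:
  assumes "x \<in> carrier G" "y \<in> carrier G" "z \<in> carrier G"
  shows "(inv y \<otimes> grp_comm G (grp_comm G x (inv y)) z \<otimes> y) \<otimes>
         (inv z \<otimes> grp_comm G (grp_comm G y (inv z)) x \<otimes> z) \<otimes>
         (inv x \<otimes> grp_comm G (grp_comm G z (inv x)) y \<otimes> x) = \<one>"
  using assms by (simp add: comm_simps)

section \<open>Commutators with generated subgroups\<close>

lemma comm_swap_mem:
  "subgroup R G \<Longrightarrow> g \<in> carrier G \<Longrightarrow> h \<in> carrier G \<Longrightarrow> grp_comm G g h \<in> R \<Longrightarrow> grp_comm G h g \<in> R"
  using subgroup.m_inv_closed comm_inv by fastforce

text \<open>If \<open>R\<close> is normalised by a subgroup \<open>C \<supseteq> S\<close> and \<open>[s,h] \<in> R\<close> for all \<open>s \<in> S\<close>,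
  then \<open>[g,h] \<in> R\<close> for all \<open>g \<in> \<langle>S\<rangle>\<close>; this is how commutator conditions are checked on
  generators only.\<close>
lemma comm_generate_left:
  assumes R: "subgroup R G" and C: "subgroup C G" and SC: "S \<subseteq> C" and h: "h \<in> carrier G"
    and conj: "\<And>c a. c \<in> C \<Longrightarrow> a \<in> R \<Longrightarrow> inv c \<otimes> a \<otimes> c \<in> R"
    and base: "\<And>s. s \<in> S \<Longrightarrow> grp_comm G s h \<in> R"
    and g: "g \<in> generate G S"
  shows "grp_comm G g h \<in> R"
proof -
  have Sc: "S \<subseteq> carrier G" using SC subgroup.subset[OF C] by blast
  from g show ?thesis
  proof (induction rule: generate.induct)
    case one then show ?case using h comm_one_left subgroup.one_closed[OF R] by simp
  next
    case (incl s) then show ?case by (rule base)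
  next
    case (inv s)
    have "s \<in> carrier G" "inv s \<in> C" using inv SC Sc subgroup.m_inv_closed[OF C] by blast+
    moreover have "inv (grp_comm G s h) \<in> R" using base[OF inv] subgroup.m_inv_closed[OF R] by blast
    ultimately show ?case using conj[of "inv s"] comm_inv_left h by simp
  next
    case (eng g1 g2)
    have "g1 \<in> carrier G" "g2 \<in> carrier G" using eng(1,2) generate_in_carrier[OF Sc] by auto
    moreover have "g2 \<in> C" using eng generate_subgroup_incl[OF SC C] by blast
    ultimately show ?case using comm_mult_left h conj eng subgroup.m_closed[OF R] by simp
  qed
qed

lemma comm_generate_right:
  assumes R: "subgroup R G" and C: "subgroup C G" and SC: "S \<subseteq> C" and g: "g \<in> carrier G"
    and conj: "\<And>c a. c \<in> C \<Longrightarrow> a \<in> R \<Longrightarrow> inv c \<otimes> a \<otimes> c \<in> R"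
    and base: "\<And>s. s \<in> S \<Longrightarrow> grp_comm G g s \<in> R"
    and h: "h \<in> generate G S"
  shows "grp_comm G g h \<in> R"
proof -
  have Sc: "S \<subseteq> carrier G" using SC subgroup.subset[OF C] by blast
  have "grp_comm G h g \<in> R"
    using comm_generate_left[OF R C SC g conj _ h] base comm_swap_mem[OF R g] Sc by blast
  then show ?thesis using comm_swap_mem[OF R] g h generate_in_carrier[OF Sc] by blast
qed

lemma comm_generate_left_normal:
  assumes "R \<lhd> G" "S \<subseteq> carrier G" "h \<in> carrier G" "\<And>s. s \<in> S \<Longrightarrow> grp_comm G s h \<in> R"
    "g \<in> generate G S"
  shows "grp_comm G g h \<in> R"
  by (rule comm_generate_left[OF normal_imp_subgroup[OF assms(1)] subgroup_self assms(2,3) _ assms(4,5)])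
     (use normal.inv_op_closed1[OF assms(1)] in blast)

lemma comm_generate_right_normal:
  assumes "R \<lhd> G" "S \<subseteq> carrier G" "g \<in> carrier G" "\<And>s. s \<in> S \<Longrightarrow> grp_comm G g s \<in> R"
    "h \<in> generate G S"
  shows "grp_comm G g h \<in> R"
  by (rule comm_generate_right[OF normal_imp_subgroup[OF assms(1)] subgroup_self assms(2,3) _ assms(4,5)])
     (use normal.inv_op_closed1[OF assms(1)] in blast)

lemma comm_inv_right_normal:
  assumes "R \<lhd> G" "g \<in> carrier G" "h \<in> carrier G" "grp_comm G g h \<in> R"
  shows "grp_comm G g (inv h) \<in> R"
  by (rule comm_generate_right_normal[OF assms(1), of "{h}"]) (use assms in \<open>auto intro: generate.inv\<close>)

lemma comm_inv_left_normal:
  assumes "R \<lhd> G" "g \<in> carrier G" "h \<in> carrier G" "grp_comm G g h \<in> R"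
  shows "grp_comm G (inv g) h \<in> R"
  by (rule comm_generate_left_normal[OF assms(1), of "{g}"]) (use assms in \<open>auto intro: generate.inv\<close>)

lemma generate_normalI:
  assumes Sc: "S \<subseteq> carrier G"
    and conj: "\<And>s g. s \<in> S \<Longrightarrow> g \<in> carrier G \<Longrightarrow> g \<otimes> s \<otimes> inv g \<in> generate G S"
  shows "generate G S \<lhd> G"
proof (rule normal_invI[OF generate_is_subgroup[OF Sc]])
  fix g h assume g: "g \<in> carrier G" and h: "h \<in> generate G S"
  from h show "g \<otimes> h \<otimes> inv g \<in> generate G S"
  proof (induction h rule: generate.induct)
    case one then show ?case using generate.one g by simp
  next
    case (incl h) then show ?case using conj g by blast
  next
    case (inv h)
    then have "inv (g \<otimes> h \<otimes> inv g) = g \<otimes> inv h \<otimes> inv g"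
      using Sc g by (auto simp: inv_mult_group m_assoc)
    then show ?case using generate_m_inv_closed[OF Sc conj[OF inv g]] by simp
  next
    case (eng h1 h2)
    have "h1 \<in> carrier G" "h2 \<in> carrier G" using eng.hyps generate_in_carrier[OF Sc] by auto
    then have "g \<otimes> (h1 \<otimes> h2) \<otimes> inv g = (g \<otimes> h1 \<otimes> inv g) \<otimes> (g \<otimes> h2 \<otimes> inv g)"
      using g by (simp add: m_assoc inv_cancel_left')
    then show ?case using generate.eng[OF eng.IH] by simp
  qed
qed

text \<open>Hall--Witt modulo a normal subgroup: two of the three double commutators lying in \<open>R\<close>
  force the third one into \<open>R\<close> (the engine of the three subgroups lemma).\<close>
lemma hall_witt_normal:
  assumes N: "R \<lhd> G" and c: "x \<in> carrier G" "y \<in> carrier G" "z \<in> carrier G"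
    and B: "grp_comm G (grp_comm G y (inv z)) x \<in> R"
    and C: "grp_comm G (grp_comm G z (inv x)) y \<in> R"
  shows "grp_comm G (grp_comm G x (inv y)) z \<in> R"
proof -
  interpret R: normal R G by (rule N)
  let ?A = "grp_comm G (grp_comm G x (inv y)) z"
  let ?BC = "(inv z \<otimes> grp_comm G (grp_comm G y (inv z)) x \<otimes> z) \<otimes>
             (inv x \<otimes> grp_comm G (grp_comm G z (inv x)) y \<otimes> x)"
  have BC: "?BC \<in> R" using R.inv_op_closed1 B C c by (blast intro: R.m_closed)
  have "(inv y \<otimes> ?A \<otimes> y) \<otimes> ?BC = \<one>"
    using hall_witt[OF c] c by (simp add: m_assoc)
  then have "inv y \<otimes> ?A \<otimes> y = inv ?BC"
    using c by (simp add: inv_equality)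
  then have "inv y \<otimes> ?A \<otimes> y \<in> R" using BC R.m_inv_closed by simp
  then have "y \<otimes> (inv y \<otimes> ?A \<otimes> y) \<otimes> inv y \<in> R" using R.inv_op_closed2 c by blast
  then show ?thesis using c by (simp add: m_assoc inv_cancel_left)
qed

end

section \<open>Mutual commutator subgroups and the lower central series\<close>

context group
begin

lemma comm_subgroup_subgroup:
  "H \<subseteq> carrier G \<Longrightarrow> K \<subseteq> carrier G \<Longrightarrow> subgroup (comm_subgroup G H K) G"
  unfolding comm_subgroup_def by (rule generate_is_subgroup) (blast intro: comm_closed)

lemma comm_subgroup_mem: "h \<in> H \<Longrightarrow> k \<in> K \<Longrightarrow> grp_comm G h k \<in> comm_subgroup G H K"
  unfolding comm_subgroup_def by (rule generate.incl) blast

lemma comm_subgroup_least: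
  "subgroup M G \<Longrightarrow> (\<And>h k. h \<in> H \<Longrightarrow> k \<in> K \<Longrightarrow> grp_comm G h k \<in> M) \<Longrightarrow> comm_subgroup G H K \<subseteq> M"
  unfolding comm_subgroup_def by (rule generate_subgroup_incl) auto

lemma comm_subgroup_normal:
  assumes H: "H \<lhd> G" and K: "K \<lhd> G" shows "comm_subgroup G H K \<lhd> G"
  unfolding comm_subgroup_def
proof (rule normal_generateI)
  have "H \<subseteq> carrier G" "K \<subseteq> carrier G"
    using H K normal_imp_subgroup subgroup.subset by blast+
  then show "{grp_comm G h k |h k. h \<in> H \<and> k \<in> K} \<subseteq> carrier G" by (blast intro: comm_closed)
  fix a g assume "a \<in> {grp_comm G h k |h k. h \<in> H \<and> k \<in> K}" and g: "g \<in> carrier G"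
  then obtain h k where hk: "a = grp_comm G h k" "h \<in> H" "k \<in> K" by blast
  have "g \<otimes> h \<otimes> inv g \<in> H" "g \<otimes> k \<otimes> inv g \<in> K"
    using normal.inv_op_closed2[OF H] normal.inv_op_closed2[OF K] hk g by blast+
  moreover have "g \<otimes> a \<otimes> inv g = grp_comm G (g \<otimes> h \<otimes> inv g) (g \<otimes> k \<otimes> inv g)"
    using conj_comm_dist g hk \<open>H \<subseteq> carrier G\<close> \<open>K \<subseteq> carrier G\<close> by blast
  ultimately show "g \<otimes> a \<otimes> inv g \<in> {grp_comm G h k |h k. h \<in> H \<and> k \<in> K}" by blast
qed

lemma lcs_Suc: "k \<ge> 1 \<Longrightarrow> lcs G (Suc k) = comm_subgroup G (lcs G k) (carrier G)"
  by (cases k) auto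

lemma lcs_normal: "lcs G k \<lhd> G"
proof (induction k)
  case 0 show ?case by (simp add: normal_self)
next
  case (Suc k) then show ?case by (cases k) (auto intro: comm_subgroup_normal normal_self)
qed

lemma lcs_subgroup: "subgroup (lcs G k) G"
  using lcs_normal normal_imp_subgroup by blast

lemma lcs_carrier: "lcs G k \<subseteq> carrier G"
  using lcs_subgroup subgroup.subset by blast

lemma lcs_comm_carrier: "k \<ge> 1 \<Longrightarrow> g \<in> lcs G k \<Longrightarrow> h \<in> carrier G \<Longrightarrow> grp_comm G g h \<in> lcs G (Suc k)"
  by (simp add: lcs_Suc comm_subgroup_mem)

lemma lcs_Suc_subset: "lcs G (Suc k) \<subseteq> lcs G k"
proof (cases "k = 0")
  case False
  then have k: "k \<ge> 1" by simp
  show ?thesis unfolding lcs_Suc[OF k]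
  proof (rule comm_subgroup_least[OF lcs_subgroup])
    fix h g assume h: "h \<in> lcs G k" and g: "g \<in> carrier G"
    have "inv h \<otimes> (inv g \<otimes> h \<otimes> g) \<in> lcs G k"
      using normal.inv_op_closed1[OF lcs_normal g h] h
      by (blast intro: subgroup.m_closed[OF lcs_subgroup] subgroup.m_inv_closed[OF lcs_subgroup])
    moreover have "h \<in> carrier G" using h lcs_carrier by blast
    ultimately show "grp_comm G h g \<in> lcs G k" using g by (simp add: grp_comm_def m_assoc)
  qed
qed simp

lemma lcs_antimono: "k \<le> l \<Longrightarrow> lcs G l \<subseteq> lcs G k"
  by (induction l rule: dec_induct) (use lcs_Suc_subset in blast)+

text \<open>The fundamental property \<open>[\<gamma>\<^sub>i, \<gamma>\<^sub>j] \<subseteq> \<gamma>\<^sub>i\<^sub>+\<^sub>j\<close>, by induction on \<open>j\<close>: for a generator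
  \<open>[y,z]\<close> of \<open>\<gamma>\<^sub>j\<^sub>+\<^sub>1\<close> the commutator \<open>[[y,z],g]\<close> is handled by Hall--Witt, both other
  double commutators lying in \<open>\<gamma>\<^sub>i\<^sub>+\<^sub>j\<^sub>+\<^sub>1\<close> by the induction hypothesis.\<close>
lemma lcs_comm:
  assumes "i \<ge> 1" "j \<ge> 1" "g \<in> lcs G i" "h \<in> lcs G j"
  shows "grp_comm G g h \<in> lcs G (i + j)"
  using assms(2,1,3,4)
proof (induction j arbitrary: i g h rule: nat_induct_at_least)
  case base
  then show ?case using lcs_comm_carrier[of i g h] lcs_carrier by auto
next
  case (Suc j)
  have gc: "g \<in> carrier G" using Suc lcs_carrier by blast
  let ?S = "{grp_comm G y z |y z. y \<in> lcs G j \<and> z \<in> carrier G}"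
  have hS: "h \<in> generate G ?S"
    using Suc.prems(3) lcs_Suc[OF Suc.hyps] unfolding comm_subgroup_def by simp
  have Sc: "?S \<subseteq> carrier G" using lcs_carrier by (blast intro: comm_closed)
  have "grp_comm G g h \<in> lcs G (i + j + 1)"
  proof (rule comm_generate_right_normal[OF lcs_normal Sc gc _ hS])
    fix s assume "s \<in> ?S"
    then obtain y z where s: "s = grp_comm G y z" "y \<in> lcs G j" "z \<in> carrier G" by blast
    have yc: "y \<in> carrier G" using s lcs_carrier by blast
    have "inv g \<in> lcs G i" using Suc.prems(2) subgroup.m_inv_closed[OF lcs_subgroup] by blast
    then have "grp_comm G (inv z) (inv g) \<in> lcs G (Suc i)"
      using lcs_comm_carrier Suc.prems(1) s gc comm_swap_mem[OF lcs_subgroup] by blast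
    then have B: "grp_comm G (grp_comm G (inv z) (inv g)) y \<in> lcs G (i + j + 1)"
      using Suc.IH[of "Suc i" _ y] s by simp
    have "inv y \<in> lcs G j" using s subgroup.m_inv_closed[OF lcs_subgroup] by blast
    then have "grp_comm G g (inv y) \<in> lcs G (i + j)" using Suc by blast
    then have C: "grp_comm G (grp_comm G g (inv y)) (inv z) \<in> lcs G (i + j + 1)"
      using lcs_comm_carrier[of "i + j"] Suc.prems(1) s by auto
    have "grp_comm G (grp_comm G y (inv (inv z))) g \<in> lcs G (i + j + 1)"
      by (rule hall_witt_normal[OF lcs_normal yc _ gc B C]) (use s in simp)
    then show "grp_comm G g s \<in> lcs G (i + j + 1)"
      using s yc gc comm_swap_mem[OF lcs_subgroup] by simp
  qed
  then show ?case by simp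
qed

lemma lcs_derived_subset:
  assumes "a \<ge> 1" "k \<le> a + a"
  shows "comm_subgroup G (lcs G a) (lcs G a) \<subseteq> lcs G k"
proof (rule comm_subgroup_least[OF lcs_subgroup])
  fix g h assume "g \<in> lcs G a" "h \<in> lcs G a"
  then show "grp_comm G g h \<in> lcs G k"
    using lcs_comm[OF assms(1) assms(1)] lcs_antimono[OF assms(2)] by blast
qed

end

section \<open>Basic commutators\<close>

lemma wt_pos: "wt t \<ge> 1"
  by (induction t) auto

lemma finite_basic: "finite {t. basic r m t \<and> wt t \<le> W}"
proof (induction W)
  case 0
  have "\<not> wt t \<le> 0" for t using wt_pos[of t] by simp
  then have "{t. basic r m t \<and> wt t \<le> 0} = {}" by blast
  then show ?case by (simp only: finite.emptyI)
next
  case (Suc W)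
  let ?A = "{t. basic r m t \<and> wt t \<le> W}"
  have "{t. basic r m t \<and> wt t \<le> Suc W} \<subseteq> Gen ` {..<m} \<union> case_prod Br ` (?A \<times> ?A)"
  proof
    fix t assume t: "t \<in> {t. basic r m t \<and> wt t \<le> Suc W}"
    show "t \<in> Gen ` {..<m} \<union> case_prod Br ` (?A \<times> ?A)"
    proof (cases t)
      case (Br b a)
      then have "(b, a) \<in> ?A \<times> ?A" using t wt_pos[of a] wt_pos[of b] by auto
      then show ?thesis using Br by force
    qed (use t in auto)
  qed
  then show ?case by (rule finite_subset) (use Suc in auto)
qed

section \<open>Hall's collection process modulo the next term of the lower central series\<close>

locale ordered_generators = group +
  fixes x :: "nat \<Rightarrow> 'a" and m :: nat and r :: "(fcomm \<times> fcomm) set"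
  assumes gens_carrier: "x ` {..<m} \<subseteq> carrier G"
    and generated: "generate G (x ` {..<m}) = carrier G"
    and admissible: "admissible_order r"
begin

lemma r_trans: "(a, b) \<in> r \<Longrightarrow> (b, c) \<in> r \<Longrightarrow> (a, c) \<in> r"
  using admissible unfolding admissible_order_def strict_linear_order_on_def trans_def by blast

lemma r_irrefl: "(a, a) \<notin> r"
  using admissible unfolding admissible_order_def strict_linear_order_on_def irrefl_def by blast

lemma r_total: "a \<noteq> b \<Longrightarrow> (a, b) \<in> r \<or> (b, a) \<in> r"
  using admissible unfolding admissible_order_def strict_linear_order_on_def total_on_def by blast

lemma r_wt: "wt s < wt t \<Longrightarrow> (s, t) \<in> r"
  using admissible unfolding admissible_order_def by blast

lemma r_wt_le: "(s, t) \<in> r \<Longrightarrow> wt s \<le> wt t"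
  using r_wt r_trans r_irrefl not_le by blast

abbreviation fe :: "fcomm \<Rightarrow> 'a" where "fe \<equiv> feval G x"

lemma fe_lcs: "basic r m t \<Longrightarrow> fe t \<in> lcs G (wt t)"
proof (induction t)
  case (Gen i) then show ?case using gens_carrier by auto
next
  case (Br b a) then show ?case using lcs_comm wt_pos by simp
qed

lemma fe_carrier: "basic r m t \<Longrightarrow> fe t \<in> carrier G"
  using fe_lcs lcs_carrier by blast

lemma fe_lcs_le: "basic r m t \<Longrightarrow> k \<le> wt t \<Longrightarrow> fe t \<in> lcs G k"
  using fe_lcs lcs_antimono by blast

text \<open>The values of the basic commutators of weight \<open>W\<close>, and the subgroup \<open>\<Lambda>\<^sub>W\<close> they
  generate together with \<open>\<gamma>\<^sub>W\<^sub>+\<^sub>1\<close>.\<close>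
definition basic_values :: "nat \<Rightarrow> 'a set" where
  "basic_values W = fe ` {t. basic r m t \<and> wt t = W}"

definition layer :: "nat \<Rightarrow> 'a set" where
  "layer W = generate G (basic_values W \<union> lcs G (Suc W))"

lemma basic_values_carrier: "basic_values W \<union> lcs G (Suc W) \<subseteq> carrier G"
  unfolding basic_values_def using fe_carrier lcs_carrier by blast

lemma basic_values_layer: "basic r m t \<Longrightarrow> fe t \<in> layer (wt t)"
  unfolding layer_def basic_values_def by (blast intro: generate.incl)

lemma lcs_Suc_layer: "lcs G (Suc W) \<subseteq> layer W"
  unfolding layer_def by (blast intro: generate.incl)

text \<open>\<open>\<Lambda>\<^sub>W\<close> is normal: conjugating \<open>fe t\<close> only adds a commutator from \<open>\<gamma>\<^sub>W\<^sub>+\<^sub>1\<close>.\<close>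
lemma layer_normal: "layer W \<lhd> G"
  unfolding layer_def
proof (rule generate_normalI[OF basic_values_carrier])
  fix s g assume s: "s \<in> basic_values W \<union> lcs G (Suc W)" and g: "g \<in> carrier G"
  show "g \<otimes> s \<otimes> inv g \<in> generate G (basic_values W \<union> lcs G (Suc W))"
  proof (cases "s \<in> lcs G (Suc W)")
    case True
    then show ?thesis using normal.inv_op_closed2[OF lcs_normal g] by (blast intro: generate.incl)
  next
    case False
    then obtain t where t: "basic r m t" "wt t = W" "s = fe t"
      using s unfolding basic_values_def by blast
    have "grp_comm G s (inv g) \<in> lcs G (Suc W)"
      using lcs_comm_carrier[OF wt_pos] fe_lcs t g by blast
    then have "s \<otimes> grp_comm G s (inv g) \<in> generate G (basic_values W \<union> lcs G (Suc W))"
      using s by (blast intro: generate.incl generate.eng)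
    then show ?thesis using conj_comm[of s "inv g"] fe_carrier t g by simp
  qed
qed

lemma layer_subgroup: "subgroup (layer W) G"
  using layer_normal normal_imp_subgroup by blast

lemma comm_layer_left:
  assumes "j \<ge> 1" "b \<in> lcs G j" "g \<in> layer V"
    and basic_case: "\<And>s. s \<in> basic_values V \<Longrightarrow> grp_comm G s b \<in> layer (V + j)"
  shows "grp_comm G g b \<in> layer (V + j)"
proof (rule comm_generate_left_normal[OF layer_normal basic_values_carrier])
  show "b \<in> carrier G" using assms(2) lcs_carrier by blast
  show "g \<in> generate G (basic_values V \<union> lcs G (Suc V))" using assms(3) unfolding layer_def .
  fix s assume "s \<in> basic_values V \<union> lcs G (Suc V)"
  moreover have "grp_comm G s b \<in> layer (V + j)" if "s \<in> lcs G (Suc V)"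
    using lcs_comm[OF _ assms(1) that assms(2)] lcs_Suc_layer by auto
  ultimately show "grp_comm G s b \<in> layer (V + j)" using basic_case by blast
qed

definition comm_in_layer :: "fcomm \<Rightarrow> fcomm \<Rightarrow> bool" where
  "comm_in_layer u v \<longleftrightarrow> grp_comm G (fe u) (fe v) \<in> layer (wt u + wt v)"

lemma comm_in_layer_swap:
  "basic r m u \<Longrightarrow> basic r m v \<Longrightarrow> comm_in_layer u v \<Longrightarrow> comm_in_layer v u"
  unfolding comm_in_layer_def
  using comm_swap_mem[OF layer_subgroup fe_carrier fe_carrier] by (simp add: add.commute)

text \<open>One step of the collection process: if \<open>u = [u\<^sub>1,u\<^sub>2]\<close> is basic, \<open>v < u\<^sub>2\<close> (so \<open>[u,v]\<close>
  is not basic), and the claim is known for all smaller total weights and for all pairs of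
  the same total weight whose smaller entry exceeds \<open>v\<close>, then Hall--Witt applied to
  \<open>a = u\<^sub>1, b = u\<^sub>2, c = v\<close> rewrites \<open>[[a,b],c]\<close> into such pairs.\<close>
context
  fixes u1 u2 v :: fcomm
  assumes basic_u1: "basic r m u1" and basic_u2: "basic r m u2" and basic_v: "basic r m v"
    and u2_u1: "(u2, u1) \<in> r" and v_u2: "(v, u2) \<in> r"
    and smaller: "\<And>u' v'. basic r m u' \<Longrightarrow> basic r m v' \<Longrightarrow> (v', u') \<in> r \<Longrightarrow>
        wt u' + wt v' < wt u1 + wt u2 + wt v \<Longrightarrow> comm_in_layer u' v'"
    and later: "\<And>u' v'. basic r m u' \<Longrightarrow> basic r m v' \<Longrightarrow> (v', u') \<in> r \<Longrightarrow>
        wt u' + wt v' = wt u1 + wt u2 + wt v \<Longrightarrow> (v, v') \<in> r \<Longrightarrow> comm_in_layer u' v'"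
begin

lemma v_u1: "(v, u1) \<in> r"
  using v_u2 u2_u1 r_trans by blast

lemma fe_carriers: "fe u1 \<in> carrier G" "fe u2 \<in> carrier G" "fe v \<in> carrier G"
  using fe_carrier basic_u1 basic_u2 basic_v by auto

lemma collect_first:
  "grp_comm G (grp_comm G (fe v) (inv (fe u1))) (inv (fe u2)) \<in> layer (wt u1 + wt u2 + wt v)"
proof -
  let ?V = "wt u1 + wt v"
  have "comm_in_layer u1 v"
    using smaller[OF basic_u1 basic_v v_u1] wt_pos[of u2] by simp
  then have "grp_comm G (fe v) (fe u1) \<in> layer ?V"
    using comm_in_layer_swap basic_u1 basic_v unfolding comm_in_layer_def by (simp add: add.commute)
  then have "grp_comm G (fe v) (inv (fe u1)) \<in> layer ?V"
    using comm_inv_right_normal[OF layer_normal] fe_carriers by blast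
  moreover have "grp_comm G s (fe u2) \<in> layer (?V + wt u2)" if s: "s \<in> basic_values ?V" for s
  proof -
    obtain w where w: "basic r m w" "wt w = ?V" "s = fe w"
      using s unfolding basic_values_def by blast
    have "(u2, w) \<in> r" using r_wt r_wt_le[OF u2_u1] wt_pos[of v] w(2) by simp
    then show ?thesis using later[OF w(1) basic_u2 _ _ v_u2] w unfolding comm_in_layer_def by simp
  qed
  ultimately have "grp_comm G (grp_comm G (fe v) (inv (fe u1))) (fe u2) \<in> layer (?V + wt u2)"
    using comm_layer_left wt_pos fe_lcs basic_u2 by blast
  then show ?thesis
    using comm_inv_right_normal[OF layer_normal] fe_carriers by (simp add: add_ac)
qed

lemma collect_second:
  "grp_comm G (grp_comm G (inv (fe u2)) (inv (fe v))) (fe u1) \<in> layer (wt u1 + wt u2 + wt v)"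
proof -
  let ?V = "wt u2 + wt v"
  have "grp_comm G (fe u2) (fe v) \<in> layer ?V"
    using smaller[OF basic_u2 basic_v v_u2] wt_pos[of u1] unfolding comm_in_layer_def by simp
  then have "grp_comm G (fe u2) (inv (fe v)) \<in> layer ?V"
    using comm_inv_right_normal[OF layer_normal] fe_carriers by blast
  then have "grp_comm G (inv (fe u2)) (inv (fe v)) \<in> layer ?V"
    using comm_inv_left_normal[OF layer_normal] fe_carriers by blast
  moreover have "grp_comm G s (fe u1) \<in> layer (?V + wt u1)" if s: "s \<in> basic_values ?V" for s
  proof -
    obtain w where w: "basic r m w" "wt w = ?V" "s = fe w"
      using s unfolding basic_values_def by blast
    have sum: "wt w + wt u1 = wt u1 + wt u2 + wt v" using w(2) by simp
    consider "w = u1" | "(u1, w) \<in> r" | "(w, u1) \<in> r" using r_total by blast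
    then have "comm_in_layer w u1"
    proof cases
      case 1
      then show ?thesis unfolding comm_in_layer_def
        using comm_self fe_carriers subgroup.one_closed[OF layer_subgroup] by simp
    next
      case 2
      then show ?thesis using later[OF w(1) basic_u1 _ sum v_u1] by blast
    next
      case 3
      have "(v, w) \<in> r" using r_wt w(2) wt_pos[of u2] by simp
      then have "comm_in_layer u1 w" using later[OF basic_u1 w(1) 3] sum by (simp add: add.commute)
      then show ?thesis using comm_in_layer_swap w(1) basic_u1 by blast
    qed
    then show ?thesis using w unfolding comm_in_layer_def by (simp add: add.commute)
  qed
  ultimately have "grp_comm G (grp_comm G (inv (fe u2)) (inv (fe v))) (fe u1) \<in> layer (?V + wt u1)"
    using comm_layer_left wt_pos fe_lcs basic_u1 by blast
  then show ?thesis by (simp add: add_ac)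
qed

lemma collect: "comm_in_layer (Br u1 u2) v"
proof -
  have "grp_comm G (grp_comm G (fe u1) (inv (inv (fe u2)))) (fe v) \<in> layer (wt u1 + wt u2 + wt v)"
    by (rule hall_witt_normal[OF layer_normal]) (use fe_carriers collect_first collect_second in auto)
  then show ?thesis unfolding comm_in_layer_def using fe_carriers by simp
qed

end

text \<open>The collection step in full: either \<open>[u,v]\<close> is itself basic, or \<open>u = [u\<^sub>1,u\<^sub>2]\<close> with
  \<open>v < u\<^sub>2\<close> and the Hall--Witt step applies.\<close>
lemma comm_in_layer_step:
  assumes basic_u: "basic r m u" and basic_v: "basic r m v" and v_u: "(v, u) \<in> r"
    and smaller: "\<And>u' v'. basic r m u' \<Longrightarrow> basic r m v' \<Longrightarrow> (v', u') \<in> r \<Longrightarrow>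
        wt u' + wt v' < wt u + wt v \<Longrightarrow> comm_in_layer u' v'"
    and later: "\<And>u' v'. basic r m u' \<Longrightarrow> basic r m v' \<Longrightarrow> (v', u') \<in> r \<Longrightarrow>
        wt u' + wt v' = wt u + wt v \<Longrightarrow> (v, v') \<in> r \<Longrightarrow> comm_in_layer u' v'"
  shows "comm_in_layer u v"
proof -
  have basic_comm: "comm_in_layer u v" if "basic r m (Br u v)"
    using basic_values_layer[OF that] unfolding comm_in_layer_def by simp
  show ?thesis
  proof (cases u)
    case (Gen i)
    then show ?thesis using basic_comm basic_u basic_v v_u by simp
  next
    case (Br u1 u2)
    show ?thesis
    proof (cases "u2 = v \<or> (u2, v) \<in> r")
      case True
      then show ?thesis using basic_comm basic_u basic_v v_u Br by simp
    next
      case False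
      then have v_u2: "(v, u2) \<in> r" using r_total by blast
      have "comm_in_layer (Br u1 u2) v"
      proof (rule collect[OF _ _ basic_v _ v_u2])
        show "basic r m u1" "basic r m u2" "(u2, u1) \<in> r" using basic_u Br by auto
      next
        fix u' v' assume "basic r m u'" "basic r m v'" "(v', u') \<in> r"
          and "wt u' + wt v' < wt u1 + wt u2 + wt v"
        then show "comm_in_layer u' v'" using smaller Br by simp
      next
        fix u' v' assume "basic r m u'" "basic r m v'" "(v', u') \<in> r"
          and "wt u' + wt v' = wt u1 + wt u2 + wt v" and "(v, v') \<in> r"
        then show "comm_in_layer u' v'" using later Br by simp
      qed
      then show ?thesis using Br by simp
    qed
  qed
qed

text \<open>Counting the basic commutators of weight \<open>< W\<close> above \<open>v\<close> gives the measure for the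
  inner induction of the collection process.\<close>
definition above :: "nat \<Rightarrow> fcomm \<Rightarrow> nat" where
  "above W v = card {s. basic r m s \<and> wt s < W \<and> (v, s) \<in> r}"

lemma above_less:
  assumes "(v, v') \<in> r" "basic r m v'" "wt v' < W"
  shows "above W v' < above W v"
  unfolding above_def
proof (rule psubset_card_mono)
  show "finite {s. basic r m s \<and> wt s < W \<and> (v, s) \<in> r}"
    by (rule finite_subset[OF _ finite_basic[of r m W]]) auto
  show "{s. basic r m s \<and> wt s < W \<and> (v', s) \<in> r} \<subset> {s. basic r m s \<and> wt s < W \<and> (v, s) \<in> r}"
    using assms r_trans r_irrefl by blast
qed

lemma comm_in_layer_ordered:
  assumes "basic r m u" "basic r m v" "(v, u) \<in> r"
  shows "comm_in_layer u v"
proof -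
  have "comm_in_layer u v"
    if "basic r m u" "basic r m v" "(v, u) \<in> r" "wt u + wt v = W" "above W v = k" for W k u v
    using that
  proof (induction W arbitrary: k u v rule: less_induct)
    case outer: (less W)
    from outer.prems show ?case
    proof (induction k arbitrary: u v rule: less_induct)
      case inner: (less k)
      show ?case
      proof (rule comm_in_layer_step[OF inner.prems(1-3)])
        fix u' v' assume "basic r m u'" "basic r m v'" "(v', u') \<in> r" "wt u' + wt v' < wt u + wt v"
        then show "comm_in_layer u' v'"
          using outer.IH[of "wt u' + wt v'" u' v'] inner.prems(4) by simp
      next
        fix u' v' assume u'v': "basic r m u'" "basic r m v'" "(v', u') \<in> r"
          and weight: "wt u' + wt v' = wt u + wt v" and "(v, v') \<in> r"
        then have "above W v' < k" using above_less wt_pos[of u'] inner.prems(4,5) by fastforce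
        then show "comm_in_layer u' v'"
          using inner.IH[of "above W v'" u' v'] u'v' weight inner.prems(4) by simp
      qed
    qed
  qed
  then show ?thesis using assms by blast
qed

lemma comm_in_layer_basic:
  assumes "basic r m u" "basic r m v"
  shows "comm_in_layer u v"
proof -
  consider "u = v" | "(v, u) \<in> r" | "(u, v) \<in> r" using r_total by blast
  then show ?thesis
  proof cases
    case 1
    then show ?thesis unfolding comm_in_layer_def
      using comm_self[OF fe_carrier[OF assms(1)]] subgroup.one_closed[OF layer_subgroup] by simp
  next
    case 2
    then show ?thesis using comm_in_layer_ordered assms by blast
  next
    case 3
    then show ?thesis using comm_in_layer_ordered comm_in_layer_swap assms by blast
  qed
qed

text \<open>\<open>\<gamma>\<^sub>w \<subseteq> \<Lambda>\<^sub>w\<close>, i.e.\ modulo \<open>\<gamma>\<^sub>w\<^sub>+\<^sub>1\<close> the group \<open>\<gamma>\<^sub>w\<close> is generated by the basic commutators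
  of weight \<open>w\<close>: by induction on \<open>w\<close>, expanding \<open>[\<gamma>\<^sub>w, G]\<close> on generators on both sides.\<close>
lemma lcs_layer: "w \<ge> 1 \<Longrightarrow> lcs G w \<subseteq> layer w"
proof (induction w rule: nat_induct_at_least)
  case base
  have "x i \<in> layer 1" if "i < m" for i
    using basic_values_layer[of "Gen i"] that by simp
  then have "generate G (x ` {..<m}) \<subseteq> layer 1"
    by (intro generate_subgroup_incl[OF _ layer_subgroup]) auto
  then show ?case using generated by simp
next
  case (Suc w)
  show ?case unfolding lcs_Suc[OF Suc.hyps]
  proof (rule comm_subgroup_least[OF layer_subgroup])
    fix g h assume g: "g \<in> lcs G w" and h: "h \<in> carrier G"
    have "grp_comm G s h \<in> layer (w + 1)" if s: "s \<in> basic_values w" for s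
    proof -
      obtain t where t: "basic r m t" "wt t = w" "s = fe t"
        using s unfolding basic_values_def by blast
      have "grp_comm G s y \<in> layer (w + 1)" if "y \<in> x ` {..<m}" for y
        using that comm_in_layer_basic[OF t(1), of "Gen i" for i] t unfolding comm_in_layer_def by auto
      moreover have "h \<in> generate G (x ` {..<m})" using h generated by simp
      ultimately show ?thesis
        using comm_generate_right_normal[OF layer_normal gens_carrier fe_carrier[OF t(1)]] t(3) by blast
    qed
    moreover have "h \<in> lcs G 1" "g \<in> layer w" using h g Suc.IH by auto
    ultimately have "grp_comm G g h \<in> layer (w + 1)"
      using comm_layer_left[of 1 h g w] by blast
    then show "grp_comm G g h \<in> layer (Suc w)" by simp
  qed
qed

lemma lcs_generated_by_basic:
  assumes "a \<ge> 1" "a \<le> j"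
  shows "lcs G a \<subseteq> generate G (fe ` {t. basic r m t \<and> a \<le> wt t \<and> wt t < j} \<union> lcs G j)"
  using assms(2)
proof (induction j rule: nat_induct_at_least)
  case base
  then show ?case by (blast intro: generate.incl)
next
  case (Suc j)
  let ?T = "fe ` {t. basic r m t \<and> a \<le> wt t \<and> wt t < j}"
  let ?S = "fe ` {t. basic r m t \<and> a \<le> wt t \<and> wt t < Suc j} \<union> lcs G (Suc j)"
  have S_carrier: "?S \<subseteq> carrier G" using fe_carrier lcs_carrier by blast
  have "basic_values j \<union> lcs G (Suc j) \<subseteq> ?S"
    unfolding basic_values_def using Suc.hyps by auto
  then have "layer j \<subseteq> generate G ?S"
    unfolding layer_def by (rule mono_generate)
  then have "lcs G j \<subseteq> generate G ?S"
    using lcs_layer[of j] Suc.hyps assms(1) by auto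
  moreover have "?T \<subseteq> generate G ?S"
    by (auto intro!: generate.incl)
  ultimately have "generate G (?T \<union> lcs G j) \<subseteq> generate G ?S"
    by (intro generate_subgroup_incl[OF _ generate_is_subgroup[OF S_carrier]]) auto
  then show ?case using Suc.IH by blast
qed

end

section \<open>Commutator subgroups modulo \<open>[K, A]\<close>\<close>

context group
begin

lemma set_mult_normal_subgroup:
  assumes H: "subgroup H G" and N: "N \<lhd> G"
  shows "subgroup (H <#> N) G" "H \<subseteq> H <#> N" "N \<subseteq> H <#> N"
proof -
  show "subgroup (H <#> N) G"
    using mult_norm_subgroup[OF N H] commut_normal[OF H N] by simp
  have "h = h \<otimes> \<one>" if "h \<in> H" for h using that subgroup.mem_carrier[OF H] by simp
  then show "H \<subseteq> H <#> N"
    unfolding set_mult_def using normal_imp_subgroup[OF N] subgroup.one_closed by blast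
  have "k = \<one> \<otimes> k" if "k \<in> N" for k using that subgroup.mem_carrier[OF normal_imp_subgroup[OF N]] by simp
  then show "N \<subseteq> H <#> N"
    unfolding set_mult_def using subgroup.one_closed[OF H] by blast
qed

lemma comm_subgroup_le_by_generators:
  assumes M: "subgroup M G" and A: "subgroup A G"
    and gen: "A \<subseteq> generate G (S \<union> K)" and SA: "S \<subseteq> A" and KA: "K \<subseteq> A"
    and conj: "\<And>c a. c \<in> A \<Longrightarrow> a \<in> M \<Longrightarrow> inv c \<otimes> a \<otimes> c \<in> M"
    and comm_SS: "\<And>s s'. s \<in> S \<Longrightarrow> s' \<in> S \<Longrightarrow> grp_comm G s s' \<in> M"
    and comm_KA: "\<And>k a. k \<in> K \<Longrightarrow> a \<in> A \<Longrightarrow> grp_comm G k a \<in> M"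
  shows "comm_subgroup G A A \<subseteq> M"
proof (rule comm_subgroup_least[OF M])
  have SK: "S \<union> K \<subseteq> A" using SA KA by blast
  have A_carrier: "A \<subseteq> carrier G" using subgroup.subset[OF A] .
  fix g h assume g: "g \<in> A" and h: "h \<in> A"
  have "grp_comm G s h \<in> M" if s: "s \<in> S \<union> K" for s
  proof (cases "s \<in> K")
    case True
    then show ?thesis using comm_KA h by blast
  next
    case False
    then have s_S: "s \<in> S" using s by blast
    have s_carrier: "s \<in> carrier G" using s_S SA A_carrier by blast
    have "grp_comm G s s' \<in> M" if s': "s' \<in> S \<union> K" for s'
    proof (cases "s' \<in> K")
      case True
      then have "grp_comm G s' s \<in> M" "s' \<in> carrier G"
        using comm_KA s_S SA KA A_carrier by blast+
      then show ?thesis using comm_swap_mem[OF M] s_carrier by blast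
    next
      case False
      then show ?thesis using comm_SS s_S s' by blast
    qed
    moreover have "h \<in> generate G (S \<union> K)" using h gen by blast
    ultimately show ?thesis using comm_generate_right[OF M A SK s_carrier conj] by blast
  qed
  moreover have "g \<in> generate G (S \<union> K)" "h \<in> carrier G" using g h gen A_carrier by blast+
  ultimately show "grp_comm G g h \<in> M" using comm_generate_left[OF M A SK _ conj] by blast
qed

lemma comm_subgroup_modulo:
  assumes A: "A \<lhd> G" and K: "K \<lhd> G" and KA: "K \<subseteq> A"
    and gen: "A \<subseteq> generate G (S \<union> K)" and SA: "S \<subseteq> A"
    and DK: "comm_subgroup G A A \<subseteq> K"
    and TD: "T \<subseteq> comm_subgroup G A A"
    and comm_SS: "\<And>s s'. s \<in> S \<Longrightarrow> s' \<in> S \<Longrightarrow> grp_comm G s s' \<in> generate G T"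
  shows "comm_subgroup G A A = generate G T <#> comm_subgroup G K A"
proof -
  let ?D = "comm_subgroup G A A" and ?N = "comm_subgroup G K A"
  let ?M = "generate G T <#> ?N"
  have A_carrier: "A \<subseteq> carrier G" using A normal_imp_subgroup subgroup.subset by blast
  have D: "subgroup ?D G" using comm_subgroup_subgroup[OF A_carrier A_carrier] .
  have N: "?N \<lhd> G" using comm_subgroup_normal[OF K A] .
  have "T \<subseteq> carrier G" using TD subgroup.subset[OF D] by (rule order_trans)
  then have T: "subgroup (generate G T) G" by (rule generate_is_subgroup)
  note M = set_mult_normal_subgroup[OF T N]
  have T_D: "generate G T \<subseteq> ?D" using generate_subgroup_incl[OF TD D] .
  have N_D: "?N \<subseteq> ?D"
    by (rule comm_subgroup_least[OF D]) (use KA in \<open>blast intro: comm_subgroup_mem\<close>)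
  have MD: "?M \<subseteq> ?D"
  proof
    fix z assume "z \<in> ?M"
    then obtain h k where "h \<in> generate G T" "k \<in> ?N" "z = h \<otimes> k"
      unfolding set_mult_def by blast
    then show "z \<in> ?D" using T_D N_D by (auto intro: subgroup.m_closed[OF D])
  qed
  have "?D \<subseteq> ?M"
  proof (rule comm_subgroup_le_by_generators[OF M(1) normal_imp_subgroup[OF A] gen SA KA])
    fix c a assume c: "c \<in> A" and a: "a \<in> ?M"
    have "a \<in> K" using a MD DK by blast
    then have "grp_comm G a c \<in> ?N" using c by (rule comm_subgroup_mem)
    then have "a \<otimes> grp_comm G a c \<in> ?M" using subgroup.m_closed[OF M(1) a] M(3) by blast
    moreover have "a \<in> carrier G" "c \<in> carrier G" using a MD subgroup.subset[OF D] c A_carrier by blast+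
    ultimately show "inv c \<otimes> a \<otimes> c \<in> ?M" using conj_comm by simp
  next
    show "grp_comm G s s' \<in> ?M" if "s \<in> S" "s' \<in> S" for s s'
      using comm_SS[OF that] M(2) by blast
    show "grp_comm G k a \<in> ?M" if "k \<in> K" "a \<in> A" for k a
      using comm_subgroup_mem[OF that] M(3) by blast
  qed
  with MD show ?thesis by blast
qed

text \<open>Under a total order on the indices, the commutators \<open>[f b, f a]\<close> with \<open>a < b\<close> already
  generate every \<open>[f b, f a]\<close>, since \<open>[g,g] = 1\<close> and \<open>[g,h]\<inverse> = [h,g]\<close>.\<close>
lemma comm_ordered_pairs_generate:
  assumes f: "f ` Y \<subseteq> carrier G"
    and total: "\<And>a b. a \<noteq> b \<Longrightarrow> (a, b) \<in> r \<or> (b, a) \<in> r"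
    and ab: "a \<in> Y" "b \<in> Y"
  shows "grp_comm G (f b) (f a) \<in> generate G {grp_comm G (f b) (f a) | a b. a \<in> Y \<and> b \<in> Y \<and> (a, b) \<in> r}"
    (is "_ \<in> generate G ?Z")
proof -
  have carrier: "f a \<in> carrier G" "f b \<in> carrier G" using f ab by auto
  consider "a = b" | "(a, b) \<in> r" | "(b, a) \<in> r" using total by blast
  then show ?thesis
  proof cases
    case 1
    then show ?thesis using comm_self carrier generate.one by simp
  next
    case 2
    then show ?thesis using ab by (blast intro: generate.incl)
  next
    case 3
    then have "grp_comm G (f a) (f b) \<in> ?Z" using ab by blast
    then have "inv (grp_comm G (f a) (f b)) \<in> generate G ?Z" by (rule generate.inv)
    then show ?thesis using comm_inv carrier by simp
  qed
qed

end

text \<open>The freeness of \<open>G\<close>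
  on \<open>x\<close> is only used through the fact that the \<open>x\<^sub>i\<close> generate \<open>G\<close>.\<close>
theorem lemma2p3:
  fixes G :: "('a, 'b) monoid_scheme" and x :: "nat \<Rightarrow> 'a"
    and m n c :: nat and r :: "(fcomm \<times> fcomm) set"
  assumes "group G"
    and "free_on G m x"
    and "admissible_order r"
    and "n \<ge> 1" and "c \<ge> 1" and "c \<ge> n - 1"
  defines "Y \<equiv> {t. basic r m t \<and> c + 1 \<le> wt t \<and> wt t \<le> c + n}"
  defines "Z \<equiv> {grp_comm G (feval G x b) (feval G x a) | a b. a \<in> Y \<and> b \<in> Y \<and> (a, b) \<in> r}"
  shows "comm_subgroup G (lcs G (c + 1)) (lcs G (c + 1)) =
         generate G Z <#>\<^bsub>G\<^esub> comm_subgroup G (lcs G (c + n + 1)) (lcs G (c + 1))"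
proof -
  interpret ordered_generators G x m r
    using assms(1-3) unfolding free_on_def ordered_generators_def ordered_generators_axioms_def by blast
  have Y_lcs: "fe ` Y \<subseteq> lcs G (c + 1)"
    unfolding Y_def using fe_lcs_le by blast
  have "{t. basic r m t \<and> c + 1 \<le> wt t \<and> wt t < c + n + 1} = Y"
    unfolding Y_def by auto
  then have generation: "lcs G (c + 1) \<subseteq> generate G (fe ` Y \<union> lcs G (c + n + 1))"
    using lcs_generated_by_basic[of "c + 1" "c + n + 1"] by simp
  have derived: "comm_subgroup G (lcs G (c + 1)) (lcs G (c + 1)) \<subseteq> lcs G (c + n + 1)"
    by (rule lcs_derived_subset) (use assms(4,6) in arith)+
  have Z_derived: "Z \<subseteq> comm_subgroup G (lcs G (c + 1)) (lcs G (c + 1))"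
    unfolding Z_def using Y_lcs by (auto intro!: comm_subgroup_mem)
  have pairs: "grp_comm G s s' \<in> generate G Z" if mem: "s \<in> fe ` Y" "s' \<in> fe ` Y" for s s'
  proof -
    obtain b a where "b \<in> Y" "a \<in> Y" "s = fe b" "s' = fe a" using mem by blast
    moreover have "fe ` Y \<subseteq> carrier G" using Y_lcs lcs_carrier by blast
    ultimately show ?thesis
      using comm_ordered_pairs_generate[of fe Y r a b] r_total unfolding Z_def by simp
  qed
  show ?thesis
    by (rule comm_subgroup_modulo[OF lcs_normal lcs_normal lcs_antimono generation Y_lcs derived
          Z_derived pairs]) simp_all
qed

end
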